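(* Let $v$ be a normalized, non-negative, monotone submodular valuation, and run the mechanism BFM-SWM described in the context with $\ell=1$, $\alpha=1+\frac{\sqrt{6}}{2}$, $\beta=3$ and any $\epsilon>0$, with all sellers behaving truthfully. Then the output $S^*$ satisfies $$v(S^* )-c(S^* )\ \ge\ 0.0877\cdot v(O)-c(O)-\epsilon/3,$$ where $O$ is an optimal solution of $\max\{v(S)-c(S): S\subseteq\mathcal{N},\ c(S)\le B\}$.
   Context: Setting. $\mathcal{N}$ is a finite set of $n$ sellers. The valuation $v:2^{\mathcal{N}}\to\mathbb{R}_{\ge 0}$ satisfies $v(\emptyset)=0$ and is submodular (for $X\subseteq Y\subseteq\mathcal{N}$ and $u\notin Y$, $v(u\mid Y)\le v(u\mid X)$), where $v(S\mid T)=v(S\cup T)-v(T)$, $v(u\mid T)=v(\{u\}\mid T)$; monotone means $v(X)\le v(Y)$ for $X\subseteq Y$. Each seller $u$ has a private cost $c(u)\ge 0$; $c(X)=\sum_{u\in X}c(u)$, $p(X)=\sum_{u\in X}p(u)$. $B>0$ is the budget, $[\ell]=\{1,\dots,\ell\}$. Sellers behave truthfully: a seller $u$ offered price $q$ accepts iff $c(u)\le q$. Mechanism BFM-SWM (inputs $B$, $\alpha>1$, $\beta>1$, $\epsilon>0$, $\ell\in\{1,2\}$): 1. Offer every seller the price $B$; let $R$ be the set of sellers who accept, and set $p(u)=B$ for $u\in R$. 2. Set $t=0$, $\rho_0=\epsilon/\alpha$, $u^*=\emptyset$ ($u^*$ is a set of at most one seller), and $S_{i,0}=\emptyset$ for $i\in[\ell]$.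 3. Repeat rounds: set $t\leftarrow t+1$, $\rho_t=\alpha\rho_{t-1}$, $S_{i,t}=\emptyset$ for all $i\in[\ell]$. Process the sellers $u\in R\setminus(\bigcup_{i=1}^{\ell}S_{i,t-1}\cup u^* )$ one at a time in a fixed order. For each such $u$: pick $j\in\arg\max_{i\in[\ell]}v(u\mid S_{i,t})$ (current contents); update $p(u)\leftarrow\min\{p(u),\ v(u\mid S_{j,t})/(\beta+\rho_t/B)\}$ and offer $p(u)$ to $u$. If $u$ accepts: if $v(S_{j,t}\cup\{u\})-p(S_{j,t}\cup\{u\})>\rho_t$ (current prices), set $u^*\leftarrow\{u\}$ and end the round immediately; otherwise add $u$ to $S_{j,t}$. If $u$ rejects, remove $u$ from $R$. After the round, stop if $R\setminus\left(\bigcup_{i=1}^{\ell}(S_{i,t-1}\cup S_{i,t})\cup u^*\right)=\emptyset$; otherwise start another round. 4. Let $M$ be the final value of $t$. Output $S^*\in\arg\max_{A\in\{S_{i,t}: i\in[\ell],\ t\in\{M-1,M\}\}\cup\{u^*\}}\big(v(A)-p(A)\big)$, paying each $u\in S^*$ its current price $p(u)$. *)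

theory Defs
  imports Complex_Main
begin

text \<open>Mechanism BFM-SWM. Sellers are of type 'a; the fixed processing order is a
  distinct list ord with set ord = N. Sets S_{i,t} are indexed by i in {1..l}.\<close>

definition marg :: "('a set \<Rightarrow> real) \<Rightarrow> 'a \<Rightarrow> 'a set \<Rightarrow> real" where
  "marg v u T = v (insert u T) - v T"

definition submodular_on :: "'a set \<Rightarrow> ('a set \<Rightarrow> real) \<Rightarrow> bool" where
  "submodular_on N v \<longleftrightarrow> (\<forall>X Y u. X \<subseteq> Y \<and> Y \<subseteq> N \<and> u \<in> N \<and> u \<notin> Y \<longrightarrow> marg v u Y \<le> marg v u X)"

definition monotone_on_sets :: "'a set \<Rightarrow> ('a set \<Rightarrow> real) \<Rightarrow> bool" where
  "monotone_on_sets N v \<longleftrightarrow> (\<forall>X Y. X \<subseteq> Y \<and> Y \<subseteq> N \<longrightarrow> v X \<le> v Y)"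

text \<open>State inside a round: R, prices p, the sets S_{i,t} (current round), u*, and a flag
  telling whether the round has ended early.\<close>
record 'a rst =
  Rs :: "'a set"
  pr :: "'a \<Rightarrow> real"
  Sc :: "nat \<Rightarrow> 'a set"
  ustar :: "'a set"
  stp :: bool

definition best_idx :: "('a set \<Rightarrow> real) \<Rightarrow> nat \<Rightarrow> (nat \<Rightarrow> 'a set) \<Rightarrow> 'a \<Rightarrow> nat" where
  "best_idx v l S u = (LEAST j. j \<in> {1..l} \<and> (\<forall>i\<in>{1..l}. marg v u (S i) \<le> marg v u (S j)))"

definition proc_one :: "('a set \<Rightarrow> real) \<Rightarrow> ('a \<Rightarrow> real) \<Rightarrow> real \<Rightarrow> real \<Rightarrow> real \<Rightarrow> nat
    \<Rightarrow> 'a \<Rightarrow> 'a rst \<Rightarrow> 'a rst" where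
  "proc_one v c B \<beta> \<rho> l u s =
    (let j = best_idx v l (Sc s) u;
         q = min (pr s u) (marg v u (Sc s j) / (\<beta> + \<rho> / B));
         p' = (pr s)(u := q)
     in if c u \<le> q then
          (if v (insert u (Sc s j)) - sum p' (insert u (Sc s j)) > \<rho>
           then s\<lparr>pr := p', ustar := {u}, stp := True\<rparr>
           else s\<lparr>pr := p', Sc := (Sc s)(j := insert u (Sc s j))\<rparr>)
        else s\<lparr>Rs := Rs s - {u}, pr := p'\<rparr>)"

fun proc_seq :: "('a set \<Rightarrow> real) \<Rightarrow> ('a \<Rightarrow> real) \<Rightarrow> real \<Rightarrow> real \<Rightarrow> real \<Rightarrow> nat
    \<Rightarrow> 'a list \<Rightarrow> 'a rst \<Rightarrow> 'a rst" where
  "proc_seq v c B \<beta> \<rho> l [] s = s"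
| "proc_seq v c B \<beta> \<rho> l (u # us) s =
     proc_seq v c B \<beta> \<rho> l us (if stp s then s else proc_one v c B \<beta> \<rho> l u s)"

text \<open>Global state after round t: R, prices, S_{.,t-1}, S_{.,t}, u*.\<close>
record 'a gst =
  gR :: "'a set"
  gp :: "'a \<Rightarrow> real"
  gprev :: "nat \<Rightarrow> 'a set"
  gcur :: "nat \<Rightarrow> 'a set"
  gu :: "'a set"

definition bfm_round :: "('a set \<Rightarrow> real) \<Rightarrow> ('a \<Rightarrow> real) \<Rightarrow> real \<Rightarrow> real \<Rightarrow> real \<Rightarrow> nat
    \<Rightarrow> 'a list \<Rightarrow> 'a gst \<Rightarrow> 'a gst" where
  "bfm_round v c B \<beta> \<rho> l ord g =
    (let todo = filter (\<lambda>u. u \<in> gR g \<and> u \<notin> (\<Union>i\<in>{1..l}. gcur g i) \<and> u \<notin> gu g) ord;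
         s = proc_seq v c B \<beta> \<rho> l todo
               \<lparr>Rs = gR g, pr = gp g, Sc = (\<lambda>_. {}), ustar = gu g, stp = False\<rparr>
     in \<lparr>gR = Rs s, gp = pr s, gprev = gcur g, gcur = Sc s, gu = ustar s\<rparr>)"

text \<open>State after t rounds; round t+1 uses rho_{t+1} = (eps/alpha) * alpha^(t+1) = eps * alpha^t.\<close>
primrec bfm_iter :: "('a set \<Rightarrow> real) \<Rightarrow> ('a \<Rightarrow> real) \<Rightarrow> real \<Rightarrow> real \<Rightarrow> real \<Rightarrow> real \<Rightarrow> nat
    \<Rightarrow> 'a list \<Rightarrow> nat \<Rightarrow> 'a gst" where
  "bfm_iter v c B \<alpha> \<beta> \<epsilon> l ord 0 =
     \<lparr>gR = {u \<in> set ord. c u \<le> B}, gp = (\<lambda>_. B), gprev = (\<lambda>_. {}), gcur = (\<lambda>_. {}), gu = {}\<rparr>"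
| "bfm_iter v c B \<alpha> \<beta> \<epsilon> l ord (Suc t) =
     bfm_round v c B \<beta> (\<epsilon> * \<alpha> ^ t) l ord (bfm_iter v c B \<alpha> \<beta> \<epsilon> l ord t)"

definition bfm_stop :: "nat \<Rightarrow> 'a gst \<Rightarrow> bool" where
  "bfm_stop l g \<longleftrightarrow> gR g - ((\<Union>i\<in>{1..l}. gprev g i \<union> gcur g i) \<union> gu g) = {}"

definition bfm_M :: "('a set \<Rightarrow> real) \<Rightarrow> ('a \<Rightarrow> real) \<Rightarrow> real \<Rightarrow> real \<Rightarrow> real \<Rightarrow> real \<Rightarrow> nat
    \<Rightarrow> 'a list \<Rightarrow> nat" where
  "bfm_M v c B \<alpha> \<beta> \<epsilon> l ord = (LEAST t. 0 < t \<and> bfm_stop l (bfm_iter v c B \<alpha> \<beta> \<epsilon> l ord t))"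

definition bfm_final :: "('a set \<Rightarrow> real) \<Rightarrow> ('a \<Rightarrow> real) \<Rightarrow> real \<Rightarrow> real \<Rightarrow> real \<Rightarrow> real \<Rightarrow> nat
    \<Rightarrow> 'a list \<Rightarrow> 'a gst" where
  "bfm_final v c B \<alpha> \<beta> \<epsilon> l ord = bfm_iter v c B \<alpha> \<beta> \<epsilon> l ord (bfm_M v c B \<alpha> \<beta> \<epsilon> l ord)"

definition bfm_candidates :: "nat \<Rightarrow> 'a gst \<Rightarrow> 'a set set" where
  "bfm_candidates l g = gprev g ` {1..l} \<union> gcur g ` {1..l} \<union> {gu g}"

definition bfm_outputs :: "('a set \<Rightarrow> real) \<Rightarrow> ('a \<Rightarrow> real) \<Rightarrow> real \<Rightarrow> real \<Rightarrow> real \<Rightarrow> real \<Rightarrow> nat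
    \<Rightarrow> 'a list \<Rightarrow> 'a set set" where
  "bfm_outputs v c B \<alpha> \<beta> \<epsilon> l ord =
    (let g = bfm_final v c B \<alpha> \<beta> \<epsilon> l ord; C = bfm_candidates l g
     in {A \<in> C. \<forall>A'\<in>C. v A' - sum (gp g) A' \<le> v A - sum (gp g) A})"

end

theory Submission
  imports Defs
begin

text \<open>
  A seller is offered at most \<open>1/\<beta>\<close> of its marginal value, so every candidate set \<open>A\<close>
  has \<open>\<beta> p(A) \<le> v(A)\<close>, i.e. \<open>v(A) \<le> \<beta>/(\<beta>-1) (v(A) - p(A))\<close>. Every round set
  ends with surplus at most the threshold \<open>\<rho>\<close> of its round, so the values of the round
  sets grow at most geometrically. A seller of \<open>O\<close> that left \<open>R\<close> rejected an offer, which bounds its marginal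
  value with respect to its round set, and by submodularity with respect to the union \<open>T\<close>
  of all round sets and \<open>u*\<close>, by \<open>c(u) (\<beta> + \<rho>/B)\<close>; hence \<open>v(O) \<le> v(T) + \<beta> c(O) + \<rho>\<close>.
  Subadditivity splits \<open>v(T)\<close> into the geometric sum over the early rounds and the three final
  candidates. Since the second-to-last round did not stop, it found a \<open>u*\<close> whose surplus,
  together with that of its round set, exceeds its threshold; these two candidates survive
  to the end with unchanged prices, so the threshold is at most twice the surplus \<open>W\<close> of the
  output. Altogether \<open>v(O) \<le> (\<beta>/(\<beta>-1) (3 + 2/(\<alpha>-1)) + 2\<alpha>) W + \<beta> c(O) + \<epsilon>\<close>; for
  \<open>\<beta> = 3\<close> the coefficient is minimised by \<open>\<alpha> = 1 + \<surd>6/2\<close>, where it equals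
  \<open>13/2 + 2\<surd>6 < 1/0.0877\<close>.
\<close>

locale monotone_submodular =
  fixes N :: "'a set" and v :: "'a set \<Rightarrow> real"
  assumes finite_ground: "finite N"
    and value_empty: "v {} = 0"
    and monotone: "monotone_on_sets N v"
    and submodular: "submodular_on N v"
begin

definition surplus :: "('a \<Rightarrow> real) \<Rightarrow> 'a set \<Rightarrow> real" where
  "surplus p A = v A - sum p A"

lemma surplus_cong: "(\<And>x. x \<in> A \<Longrightarrow> p x = p' x) \<Longrightarrow> surplus p A = surplus p' A"
  unfolding surplus_def by (simp cong: sum.cong)

lemma value_mono: "X \<subseteq> Y \<Longrightarrow> Y \<subseteq> N \<Longrightarrow> v X \<le> v Y"
  using monotone unfolding monotone_on_sets_def by blast

lemma value_nonneg: "X \<subseteq> N \<Longrightarrow> 0 \<le> v X"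
  using value_mono[of "{}" X] value_empty by simp

lemma marg_antimono:
  "X \<subseteq> Y \<Longrightarrow> Y \<subseteq> N \<Longrightarrow> u \<in> N \<Longrightarrow> u \<notin> Y \<Longrightarrow> marg v u Y \<le> marg v u X"
  using submodular unfolding submodular_on_def by blast

lemma marg_nonneg: "u \<in> N \<Longrightarrow> S \<subseteq> N \<Longrightarrow> 0 \<le> marg v u S"
  unfolding marg_def using value_mono[of S "insert u S"] by auto

lemma marg_le_singleton:
  assumes "u \<in> N" "S \<subseteq> N"
  shows "marg v u S \<le> v {u}"
proof (cases "u \<in> S")
  case True
  then show ?thesis using value_nonneg[of "{u}"] assms by (simp add: marg_def insert_absorb)
next
  case False
  then have "marg v u S \<le> marg v u {}" using marg_antimono[of "{}" S u] assms by auto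
  then show ?thesis by (simp add: marg_def value_empty)
qed

lemma value_union_le_sum_marg:
  assumes "finite F" "F \<subseteq> N" "T \<subseteq> N"
  shows "v (T \<union> F) \<le> v T + (\<Sum>f\<in>F - T. marg v f T)"
  using assms
proof (induction F rule: finite_induct)
  case empty
  then show ?case by simp
next
  case (insert x F)
  show ?case
  proof (cases "x \<in> T")
    case True
    then have "T \<union> insert x F = T \<union> F" "insert x F - T = F - T" by auto
    then show ?thesis using insert by simp
  next
    case False
    have "v (T \<union> insert x F) = v (T \<union> F) + marg v x (T \<union> F)"
      by (simp add: marg_def)
    also have "marg v x (T \<union> F) \<le> marg v x T"
      using marg_antimono[of T "T \<union> F" x] insert False by auto
    finally have "v (T \<union> insert x F) \<le> v (T \<union> F) + marg v x T" by simp
    moreover have "insert x F - T = insert x (F - T)" "finite (F - T)" "x \<notin> F - T"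
      using False insert by auto
    ultimately show ?thesis using insert by simp
  qed
qed

lemma value_le_by_marg_bound:
  assumes "A \<subseteq> N" "T \<subseteq> N" and bound: "\<And>x. x \<in> A - T \<Longrightarrow> marg v x T \<le> f x"
  shows "v A \<le> v T + sum f (A - T)"
proof -
  have "finite A" using assms(1) finite_ground finite_subset by blast
  have "v A \<le> v (T \<union> A)" using value_mono assms by auto
  also have "\<dots> \<le> v T + (\<Sum>x\<in>A - T. marg v x T)"
    using value_union_le_sum_marg \<open>finite A\<close> assms by blast
  also have "\<dots> \<le> v T + sum f (A - T)" using bound by (intro add_left_mono sum_mono) auto
  finally show ?thesis .
qed

lemma subadditive:
  assumes "A \<subseteq> N" "C \<subseteq> N"
  shows "v (A \<union> C) \<le> v A + v C"
proof -
  have "finite C" using assms(2) finite_ground finite_subset by blast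
  then show ?thesis using assms(2)
  proof (induction C rule: finite_induct)
    case empty
    then show ?case by (simp add: value_empty)
  next
    case (insert x C)
    show ?case
    proof (cases "x \<in> A")
      case True
      then have "v (A \<union> insert x C) = v (A \<union> C)" by (simp add: insert_absorb)
      also have "\<dots> \<le> v A + v C" using insert by simp
      also have "v C \<le> v (insert x C)" using value_mono insert.prems by blast
      finally show ?thesis by simp
    next
      case False
      have "v (A \<union> insert x C) = v (A \<union> C) + marg v x (A \<union> C)" by (simp add: marg_def)
      also have "marg v x (A \<union> C) \<le> marg v x C"
        using marg_antimono[of C "A \<union> C" x] False assms(1) insert by auto
      also have "v (A \<union> C) \<le> v A + v C" using insert by simp
      finally show ?thesis by (simp add: marg_def)
    qed
  qed
qed

lemma subadditive_UN:
  "finite K \<Longrightarrow> (\<And>k. k \<in> K \<Longrightarrow> A k \<subseteq> N) \<Longrightarrow> v (\<Union>k\<in>K. A k) \<le> (\<Sum>k\<in>K. v (A k))"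
proof (induction K rule: finite_induct)
  case empty
  then show ?case by (simp add: value_empty)
next
  case (insert k K)
  have "v (\<Union>j\<in>insert k K. A j) \<le> v (A k) + v (\<Union>j\<in>K. A j)"
    using subadditive[of "A k" "\<Union>j\<in>K. A j"] insert.prems by auto
  then show ?case using insert by simp
qed

lemma surplus_insert_le:
  assumes "u \<in> N" "S \<subseteq> N" "u \<notin> S"
  shows "surplus p (insert u S) \<le> surplus p S + surplus p {u}"
proof -
  have "finite S" using assms(2) finite_ground finite_subset by blast
  then show ?thesis
    using subadditive[of S "{u}"] assms unfolding surplus_def by simp
qed

end

lemma best_idx_single: "best_idx v 1 S u = 1"
  unfolding best_idx_def by (rule Least_equality) auto

abbreviation candidates :: "'a gst \<Rightarrow> 'a set set" where
  "candidates g \<equiv> {gprev g 1, gcur g 1, gu g}"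

lemma bfm_candidates_single: "bfm_candidates 1 g = candidates g"
  by (auto simp: bfm_candidates_def)

lemma bfm_stop_single: "bfm_stop 1 g \<longleftrightarrow> gR g \<subseteq> gprev g 1 \<union> gcur g 1 \<union> gu g"
  by (auto simp: bfm_stop_def)

lemma le_ratio_mult:
  fixes \<beta> x y :: real
  assumes "1 < \<beta>" "(\<beta> - 1) * x \<le> \<beta> * y"
  shows "x \<le> \<beta> / (\<beta> - 1) * y"
  using assms by (simp add: field_simps)

lemma offered_price_bounds:
  fixes m p c B \<beta> \<rho> :: real
  assumes "0 \<le> m" "0 \<le> \<rho>" "0 < B" "0 < \<beta>"
  defines "q \<equiv> min p (m / (\<beta> + \<rho> / B))"
  shows "\<beta> * q \<le> m" and "c \<le> p \<Longrightarrow> q < c \<Longrightarrow> m \<le> c * (\<beta> + \<rho> / B)"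
proof -
  have d: "\<beta> \<le> \<beta> + \<rho> / B" using assms by simp
  have "m / (\<beta> + \<rho> / B) \<le> m / \<beta>"
    using d assms by (intro divide_left_mono) (auto intro!: mult_pos_pos add_pos_nonneg)
  then have "\<beta> * (m / (\<beta> + \<rho> / B)) \<le> m" using assms by (simp add: le_divide_eq mult.commute)
  moreover have "\<beta> * q \<le> \<beta> * (m / (\<beta> + \<rho> / B))"
    unfolding q_def using assms(4) by (intro mult_left_mono) auto
  ultimately show "\<beta> * q \<le> m" by linarith
  assume "c \<le> p" "q < c"
  then have "m / (\<beta> + \<rho> / B) < c" unfolding q_def by linarith
  then show "m \<le> c * (\<beta> + \<rho> / B)" using d assms by (simp add: divide_less_eq)
qed

locale bfm_setting = monotone_submodular +
  fixes c :: "'a \<Rightarrow> real" and B \<beta> :: real and ord :: "'a list"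
  assumes cost_nonneg: "\<forall>u\<in>N. 0 \<le> c u"
    and budget_pos: "0 < B" and beta_pos: "0 < \<beta>"
    and distinct_ord: "distinct ord" and set_ord: "set ord = N"
begin

text \<open>\<open>s0\<close> is the state at the start of the round, \<open>D\<close> the set of sellers processed so far.\<close>

definition round_inv :: "real \<Rightarrow> 'a rst \<Rightarrow> 'a set \<Rightarrow> 'a rst \<Rightarrow> bool" where
  "round_inv \<rho> s0 D s \<longleftrightarrow>
     Rs s \<subseteq> Rs s0 \<and> Rs s0 - Rs s \<subseteq> D \<and> (\<forall>u\<in>Rs s. c u \<le> pr s u)
     \<and> (\<forall>x. x \<notin> D \<longrightarrow> pr s x = pr s0 x)
     \<and> Sc s 1 \<subseteq> Rs s \<inter> D \<and> \<beta> * sum (pr s) (Sc s 1) \<le> v (Sc s 1) \<and> surplus (pr s) (Sc s 1) \<le> \<rho>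
     \<and> (\<forall>u\<in>Rs s0 - Rs s. marg v u (Sc s 1) \<le> c u * (\<beta> + \<rho> / B))
     \<and> (if stp s
         then ustar s \<subseteq> Rs s \<and> \<beta> * sum (pr s) (ustar s) \<le> v (ustar s)
           \<and> \<rho> < surplus (pr s) (Sc s 1) + surplus (pr s) (ustar s)
         else D \<inter> Rs s \<subseteq> Sc s 1 \<and> ustar s = ustar s0)"

lemma round_inv_reject:
  assumes inv: "round_inv \<rho> s0 D s" and running: "\<not> stp s" and u: "u \<in> Rs s - D"
    and marg: "marg v u (Sc s 1) \<le> c u * (\<beta> + \<rho> / B)"
  shows "round_inv \<rho> s0 (insert u D) (s\<lparr>Rs := Rs s - {u}, pr := (pr s)(u := q)\<rparr>)"
proof -
  have uS: "u \<notin> Sc s 1" using inv u unfolding round_inv_def by auto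
  then have "sum ((pr s)(u := q)) (Sc s 1) = sum (pr s) (Sc s 1)" by (intro sum.cong) auto
  then show ?thesis using inv running u marg uS unfolding round_inv_def surplus_def by auto
qed

lemma round_inv_stop:
  assumes inv: "round_inv \<rho> s0 D s" and running: "\<not> stp s" and u: "u \<in> Rs s - D"
    and R0: "Rs s0 \<subseteq> N" and accept: "c u \<le> q" and price: "\<beta> * q \<le> v {u}"
    and gain: "\<rho> < surplus ((pr s)(u := q)) (insert u (Sc s 1))"
  shows "round_inv \<rho> s0 (insert u D) (s\<lparr>pr := (pr s)(u := q), ustar := {u}, stp := True\<rparr>)"
proof -
  let ?p = "(pr s)(u := q)"
  have uS: "u \<notin> Sc s 1" and SN: "Sc s 1 \<subseteq> N" and uN: "u \<in> N"
    using inv u R0 unfolding round_inv_def by auto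
  then have "sum ?p (Sc s 1) = sum (pr s) (Sc s 1)" by (intro sum.cong) auto
  moreover have "\<rho> < surplus ?p (Sc s 1) + surplus ?p {u}"
    using gain surplus_insert_le[OF uN SN uS, of ?p] by linarith
  ultimately show ?thesis
    using inv running u accept price uS unfolding round_inv_def surplus_def by auto
qed

lemma round_inv_accept:
  assumes inv: "round_inv \<rho> s0 D s" and running: "\<not> stp s" and u: "u \<in> Rs s - D"
    and R0: "Rs s0 \<subseteq> N" and accept: "c u \<le> q" and price: "\<beta> * q \<le> marg v u (Sc s 1)"
    and no_gain: "surplus ((pr s)(u := q)) (insert u (Sc s 1)) \<le> \<rho>"
  shows "round_inv \<rho> s0 (insert u D)
    (s\<lparr>pr := (pr s)(u := q), Sc := (Sc s)(1 := insert u (Sc s 1))\<rparr>)"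
proof -
  let ?p = "(pr s)(u := q)" and ?S = "Sc s 1"
  have uS: "u \<notin> ?S" and SN: "?S \<subseteq> N" and uN: "u \<in> N"
    using inv u R0 unfolding round_inv_def by auto
  have "finite ?S" using SN finite_ground finite_subset by blast
  have sum_S: "sum ?p ?S = sum (pr s) ?S" using uS by (intro sum.cong) auto
  then have "sum ?p (insert u ?S) = q + sum (pr s) ?S" using \<open>finite ?S\<close> uS by simp
  then have "\<beta> * sum ?p (insert u ?S) \<le> v (insert u ?S)"
    using inv price unfolding round_inv_def marg_def by (simp add: distrib_left)
  moreover have "marg v x (insert u ?S) \<le> c x * (\<beta> + \<rho> / B)" if x: "x \<in> Rs s0 - Rs s" for x
  proof -
    have "x \<notin> insert u ?S" "x \<in> N" using x u R0 inv unfolding round_inv_def by auto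
    then have "marg v x (insert u ?S) \<le> marg v x ?S"
      using marg_antimono[of ?S "insert u ?S" x] uN SN by auto
    moreover have "marg v x ?S \<le> c x * (\<beta> + \<rho> / B)" using inv x unfolding round_inv_def by blast
    ultimately show ?thesis by linarith
  qed
  ultimately show ?thesis
    using inv running u accept no_gain sum_S unfolding round_inv_def by auto
qed

lemma round_inv_step:
  assumes inv: "round_inv \<rho> s0 D s" and R0: "Rs s0 \<subseteq> N" and u0: "u \<in> Rs s0 - D"
    and \<rho>: "0 \<le> \<rho>"
  shows "round_inv \<rho> s0 (insert u D) (if stp s then s else proc_one v c B \<beta> \<rho> 1 u s)"
proof (cases "stp s")
  case True
  then show ?thesis using inv unfolding round_inv_def by auto
next
  case running: False
  define m where "m = marg v u (Sc s 1)"
  define q where "q = min (pr s u) (m / (\<beta> + \<rho> / B))"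
  have u: "u \<in> Rs s - D" and uN: "u \<in> N" and SN: "Sc s 1 \<subseteq> N"
    using inv u0 R0 unfolding round_inv_def by auto
  have "\<forall>x\<in>Rs s. c x \<le> pr s x" using inv unfolding round_inv_def by simp
  then have cost: "c u \<le> pr s u" using u by blast
  have m0: "0 \<le> m" unfolding m_def using marg_nonneg uN SN .
  have step: "proc_one v c B \<beta> \<rho> 1 u s =
    (if c u \<le> q then
       if \<rho> < surplus ((pr s)(u := q)) (insert u (Sc s 1))
       then s\<lparr>pr := (pr s)(u := q), ustar := {u}, stp := True\<rparr>
       else s\<lparr>pr := (pr s)(u := q), Sc := (Sc s)(1 := insert u (Sc s 1))\<rparr>
     else s\<lparr>Rs := Rs s - {u}, pr := (pr s)(u := q)\<rparr>)"
    unfolding proc_one_def best_idx_single Let_def q_def m_def surplus_def by simp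
  have price: "\<beta> * q \<le> m"
    unfolding q_def using offered_price_bounds(1) m0 \<rho> budget_pos beta_pos .
  show ?thesis
  proof (cases "c u \<le> q")
    case False
    then have "m \<le> c u * (\<beta> + \<rho> / B)"
      using offered_price_bounds(2) m0 \<rho> budget_pos beta_pos cost unfolding q_def by force
    then show ?thesis
      using round_inv_reject[OF inv running u] running step False unfolding m_def by simp
  next
    case True
    have "\<beta> * q \<le> v {u}" using price marg_le_singleton[OF uN SN] unfolding m_def by linarith
    then show ?thesis
      using round_inv_stop[OF inv running u R0 True] round_inv_accept[OF inv running u R0 True]
        price running step True unfolding m_def by (auto simp: not_less)
  qed
qed

lemma round_inv_proc_seq:
  assumes "round_inv \<rho> s0 D s" "Rs s0 \<subseteq> N" "0 \<le> \<rho>" "distinct xs" "set xs \<subseteq> Rs s0 - D"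
  shows "round_inv \<rho> s0 (D \<union> set xs) (proc_seq v c B \<beta> \<rho> 1 xs s)"
  using assms(1,4,5)
proof (induction xs arbitrary: D s)
  case Nil
  then show ?case by simp
next
  case (Cons u xs)
  define s1 where "s1 = (if stp s then s else proc_one v c B \<beta> \<rho> 1 u s)"
  have "round_inv \<rho> s0 (insert u D) s1"
    unfolding s1_def using round_inv_step Cons.prems assms(2,3) by auto
  then have "round_inv \<rho> s0 (insert u D \<union> set xs) (proc_seq v c B \<beta> \<rho> 1 xs s1)"
    using Cons.IH[of "insert u D" s1] Cons.prems by auto
  then show ?case by (simp only: proc_seq.simps list.set Un_insert_left Un_insert_right s1_def)
qed

definition state_inv :: "'a gst \<Rightarrow> bool" where
  "state_inv g \<longleftrightarrow> gR g \<subseteq> N \<and> (\<forall>u\<in>gR g. c u \<le> gp g u)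
     \<and> (\<forall>A\<in>candidates g. A \<subseteq> gR g \<and> \<beta> * sum (gp g) A \<le> v A)"

definition round_start :: "'a gst \<Rightarrow> 'a rst" where
  "round_start g = \<lparr>Rs = gR g, pr = gp g, Sc = (\<lambda>_. {}), ustar = gu g, stp = False\<rparr>"

definition round_todo :: "'a gst \<Rightarrow> 'a list" where
  "round_todo g = filter (\<lambda>u. u \<in> gR g \<and> u \<notin> gcur g 1 \<and> u \<notin> gu g) ord"

lemma bfm_round_eq:
  "bfm_round v c B \<beta> \<rho> 1 ord g =
    (let s = proc_seq v c B \<beta> \<rho> 1 (round_todo g) (round_start g)
     in \<lparr>gR = Rs s, gp = pr s, gprev = gcur g, gcur = Sc s, gu = ustar s\<rparr>)"
  unfolding bfm_round_def round_todo_def round_start_def by simp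

lemma set_round_todo: "state_inv g \<Longrightarrow> set (round_todo g) = {u \<in> gR g. u \<notin> gcur g 1 \<and> u \<notin> gu g}"
  using set_ord unfolding round_todo_def state_inv_def by auto

lemma round_inv_round:
  assumes "state_inv g" "0 \<le> \<rho>"
  shows "round_inv \<rho> (round_start g) (set (round_todo g))
    (proc_seq v c B \<beta> \<rho> 1 (round_todo g) (round_start g))"
proof -
  have "round_inv \<rho> (round_start g) {} (round_start g)"
    using assms unfolding round_inv_def round_start_def state_inv_def surplus_def
    by (simp add: value_empty)
  moreover have "Rs (round_start g) \<subseteq> N" using assms(1) unfolding round_start_def state_inv_def by simp
  moreover have "distinct (round_todo g)" unfolding round_todo_def using distinct_ord by simp
  moreover have "set (round_todo g) \<subseteq> Rs (round_start g)"
    using set_round_todo[OF assms(1)] unfolding round_start_def by auto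
  ultimately show ?thesis using round_inv_proc_seq assms(2) by fastforce
qed

lemma bfm_round_props:
  assumes inv: "state_inv g" and \<rho>: "0 \<le> \<rho>"
  defines "g' \<equiv> bfm_round v c B \<beta> \<rho> 1 ord g"
  shows "state_inv g'" and "gprev g' = gcur g"
    and "\<forall>u\<in>gR g - gR g'. marg v u (gcur g' 1) \<le> c u * (\<beta> + \<rho> / B)"
    and "surplus (gp g') (gcur g' 1) \<le> \<rho>"
    and "\<forall>u\<in>gcur g 1 \<union> gu g. gp g' u = gp g u"
    and "(gu g' = gu g \<and> bfm_stop 1 g')
      \<or> \<rho> < surplus (gp g') (gcur g' 1) + surplus (gp g') (gu g')"
proof -
  define s where "s = proc_seq v c B \<beta> \<rho> 1 (round_todo g) (round_start g)"
  have g': "g' = \<lparr>gR = Rs s, gp = pr s, gprev = gcur g, gcur = Sc s, gu = ustar s\<rparr>"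
    unfolding g'_def bfm_round_eq s_def by (simp add: Let_def)
  note todo = set_round_todo[OF inv]
  from inv have RN: "gR g \<subseteq> N"
    and cand: "\<forall>A\<in>candidates g. A \<subseteq> gR g \<and> \<beta> * sum (gp g) A \<le> v A"
    unfolding state_inv_def by auto
  have "round_inv \<rho> (round_start g) (set (round_todo g)) s"
    unfolding s_def by (rule round_inv_round[OF inv \<rho>])
  then have R: "Rs s \<subseteq> gR g" "gR g - Rs s \<subseteq> set (round_todo g)" "\<forall>u\<in>Rs s. c u \<le> pr s u"
    "\<forall>x. x \<notin> set (round_todo g) \<longrightarrow> pr s x = gp g x"
    "Sc s 1 \<subseteq> Rs s" "\<beta> * sum (pr s) (Sc s 1) \<le> v (Sc s 1)" "surplus (pr s) (Sc s 1) \<le> \<rho>"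
    "\<forall>u\<in>gR g - Rs s. marg v u (Sc s 1) \<le> c u * (\<beta> + \<rho> / B)"
    and R_stop: "stp s \<Longrightarrow> ustar s \<subseteq> Rs s \<and> \<beta> * sum (pr s) (ustar s) \<le> v (ustar s)
           \<and> \<rho> < surplus (pr s) (Sc s 1) + surplus (pr s) (ustar s)"
    and R_run: "\<not> stp s \<Longrightarrow> set (round_todo g) \<inter> Rs s \<subseteq> Sc s 1 \<and> ustar s = gu g"
    unfolding round_inv_def round_start_def by (auto split: if_splits)
  have kept: "gcur g 1 \<union> gu g \<subseteq> Rs s" using R(1,2) cand todo by auto
  show unchanged: "\<forall>u\<in>gcur g 1 \<union> gu g. gp g' u = gp g u" using R(4) todo g' by auto
  then have same_sum: "sum (gp g') A = sum (gp g) A" if "A \<subseteq> gcur g 1 \<union> gu g" for A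
    using that by (intro sum.cong) auto
  show "gprev g' = gcur g" using g' by simp
  show "\<forall>u\<in>gR g - gR g'. marg v u (gcur g' 1) \<le> c u * (\<beta> + \<rho> / B)"
    "surplus (gp g') (gcur g' 1) \<le> \<rho>" using R g' by simp_all
  show "state_inv g'"
  proof -
    have "gu g' \<subseteq> gR g' \<and> \<beta> * sum (gp g') (gu g') \<le> v (gu g')"
      using R_stop R_run kept cand same_sum[of "gu g"] g' by (cases "stp s") auto
    moreover have "\<beta> * sum (gp g') (gcur g 1) \<le> v (gcur g 1)" using cand same_sum by auto
    ultimately show ?thesis using R RN kept g' unfolding state_inv_def by auto
  qed
  show "(gu g' = gu g \<and> bfm_stop 1 g')
      \<or> \<rho> < surplus (gp g') (gcur g' 1) + surplus (gp g') (gu g')"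
  proof (cases "stp s")
    case True
    then show ?thesis using R_stop g' by simp
  next
    case False
    then have "gR g' \<subseteq> gprev g' 1 \<union> gcur g' 1 \<union> gu g'"
      using R_run R(1) todo g' by auto
    then show ?thesis using R_run False g' unfolding bfm_stop_single by simp
  qed
qed

lemma candidate_value_le_surplus:
  assumes "state_inv g" "A \<in> candidates g"
  shows "(\<beta> - 1) * v A \<le> \<beta> * surplus (gp g) A"
proof -
  have "\<beta> * sum (gp g) A \<le> v A" using assms unfolding state_inv_def by auto
  then show ?thesis unfolding surplus_def by (simp add: algebra_simps)
qed

lemma candidate_surplus_le_value:
  assumes "state_inv g" "A \<in> candidates g"
  shows "surplus (gp g) A \<le> v N"
proof -
  have A: "A \<subseteq> gR g" "gR g \<subseteq> N" "\<forall>u\<in>gR g. c u \<le> gp g u"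
    using assms unfolding state_inv_def by auto
  have "0 \<le> gp g x" if "x \<in> A" for x
  proof -
    have "x \<in> gR g" "x \<in> N" using that A by auto
    then show ?thesis using A(3) cost_nonneg by force
  qed
  then have "0 \<le> sum (gp g) A" by (simp add: sum_nonneg)
  moreover have "v A \<le> v N" using A value_mono[of A N] by simp
  ultimately show ?thesis unfolding surplus_def by linarith
qed

end

declare bfm_iter.simps(2) [simp del]

locale bfm_run = bfm_setting +
  fixes \<alpha> \<epsilon> :: real
  assumes alpha_gt_1: "1 < \<alpha>" and eps_pos: "0 < \<epsilon>"
begin

text \<open>\<open>round_set k\<close> is the set \<open>S\<^sub>1\<^sub>,\<^sub>k\<^sub>+\<^sub>1\<close> built in round \<open>k + 1\<close>, whose threshold
  is \<open>rho k = \<epsilon> \<alpha>\<^sup>k\<close> (the paper's \<open>\<rho>\<^sub>k\<^sub>+\<^sub>1\<close>).\<close>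

abbreviation state :: "nat \<Rightarrow> 'a gst" where
  "state t \<equiv> bfm_iter v c B \<alpha> \<beta> \<epsilon> 1 ord t"

abbreviation rho :: "nat \<Rightarrow> real" where
  "rho t \<equiv> \<epsilon> * \<alpha> ^ t"

abbreviation round_set :: "nat \<Rightarrow> 'a set" where
  "round_set k \<equiv> gcur (state (Suc k)) 1"

abbreviation M :: nat where
  "M \<equiv> bfm_M v c B \<alpha> \<beta> \<epsilon> 1 ord"

lemma state_Suc: "state (Suc t) = bfm_round v c B \<beta> (rho t) 1 ord (state t)"
  by (simp add: bfm_iter.simps)

lemma rho_nonneg: "0 \<le> rho t"
  using alpha_gt_1 eps_pos by simp

lemma rho_mono: "k \<le> t \<Longrightarrow> rho k \<le> rho t"
  using alpha_gt_1 eps_pos by (simp add: power_increasing)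

lemma state_inv_state: "state_inv (state t)"
proof (induction t)
  case 0
  show ?case using set_ord by (simp add: state_inv_def value_empty)
next
  case (Suc t)
  show ?case using bfm_round_props(1)[OF Suc rho_nonneg] by (simp add: bfm_iter.simps)
qed

lemmas state_round_props =
  bfm_round_props[OF state_inv_state[of t] rho_nonneg[of t], folded state_Suc] for t

lemma state_candidates_subset: "A \<in> candidates (state t) \<Longrightarrow> A \<subseteq> N"
  using state_inv_state[of t] unfolding state_inv_def by auto

lemma gcur_state_subset: "gcur (state t) 1 \<subseteq> (\<Union>k<t. round_set k)"
  by (cases t) auto

lemma rejected_marg_bound:
  "u \<in> gR (state 0) - gR (state t) \<Longrightarrow> \<exists>k<t. marg v u (round_set k) \<le> c u * (\<beta> + rho k / B)"
proof (induction t)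
  case 0
  then show ?case by simp
next
  case (Suc t)
  show ?case
  proof (cases "u \<in> gR (state t)")
    case True
    then have "marg v u (round_set t) \<le> c u * (\<beta> + rho t / B)"
      using Suc.prems state_round_props(3)[of t] by blast
    then show ?thesis by blast
  next
    case False
    then show ?thesis using Suc less_SucI by blast
  qed
qed

lemma round_set_value_le: "(\<beta> - 1) * v (round_set k) \<le> \<beta> * rho k"
proof -
  have "(\<beta> - 1) * v (round_set k) \<le> \<beta> * surplus (gp (state (Suc k))) (round_set k)"
    using candidate_value_le_surplus[OF state_inv_state] by simp
  also have "\<dots> \<le> \<beta> * rho k"
    using state_round_props(4)[of k] beta_pos by simp
  finally show ?thesis .
qed

lemma eventually_stops: "\<exists>t>0. bfm_stop 1 (state t)"
proof -
  obtain n where n: "2 * v N / \<epsilon> < \<alpha> ^ n" using real_arch_pow[OF alpha_gt_1] by blast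
  let ?g = "state (Suc n)"
  have "surplus (gp ?g) (gcur ?g 1) \<le> v N" "surplus (gp ?g) (gu ?g) \<le> v N"
    using candidate_surplus_le_value[OF state_inv_state] by simp_all
  moreover have "2 * v N < rho n" using n eps_pos by (simp add: divide_less_eq mult.commute)
  ultimately have "\<not> rho n < surplus (gp ?g) (gcur ?g 1) + surplus (gp ?g) (gu ?g)" by linarith
  then have "bfm_stop 1 ?g" using state_round_props(6)[of n] by blast
  then show ?thesis by blast
qed

lemma M_stops: "0 < M" "bfm_stop 1 (state M)"
  using LeastI_ex[OF eventually_stops] unfolding bfm_M_def by auto

lemma not_stopped_before_M: "0 < t \<Longrightarrow> t < M \<Longrightarrow> \<not> bfm_stop 1 (state t)"
  using not_less_Least unfolding bfm_M_def by blast

definition selected :: "'a set" where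
  "selected = (\<Union>k<M. round_set k) \<union> gu (state M)"

lemma selected_subset: "selected \<subseteq> N"
  unfolding selected_def using state_candidates_subset by blast

lemma remaining_subset_selected: "gR (state M) \<subseteq> selected"
proof -
  obtain m where M: "M = Suc m" using M_stops(1) gr0_implies_Suc by blast
  have "gprev (state M) 1 = gcur (state m) 1" using state_round_props(2)[of m] M by simp
  also have "\<dots> \<subseteq> (\<Union>k<m. round_set k)" by (rule gcur_state_subset)
  also have "\<dots> \<subseteq> (\<Union>k<M. round_set k)" using M by (intro UN_mono) auto
  finally show ?thesis
    using M_stops(2) gcur_state_subset[of M] unfolding bfm_stop_single selected_def by auto
qed

lemma marg_selected_le:
  assumes x: "x \<in> N - selected" "c x \<le> B" and M: "M = Suc m"
  shows "marg v x selected \<le> c x * (\<beta> + rho m / B)"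
proof -
  have "x \<in> gR (state 0) - gR (state M)"
    using x set_ord remaining_subset_selected by auto
  then obtain k where k: "k < M" "marg v x (round_set k) \<le> c x * (\<beta> + rho k / B)"
    using rejected_marg_bound by blast
  have "round_set k \<subseteq> selected" using k(1) unfolding selected_def by auto
  then have "marg v x selected \<le> marg v x (round_set k)"
    using marg_antimono selected_subset x by blast
  moreover have "rho k / B \<le> rho m / B"
    using rho_mono[of k m] k(1) M budget_pos by (simp add: divide_right_mono)
  then have "c x * (\<beta> + rho k / B) \<le> c x * (\<beta> + rho m / B)"
    using cost_nonneg x by (intro mult_left_mono) auto
  ultimately show ?thesis using k(2) by linarith
qed

lemma selected_value_le: "v selected \<le> (\<Sum>k<M. v (round_set k)) + v (gu (state M))"
proof -
  have "(\<Union>k<M. round_set k) \<subseteq> N" "gu (state M) \<subseteq> N"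
    using state_candidates_subset by blast+
  then have "v selected \<le> v (\<Union>k<M. round_set k) + v (gu (state M))"
    unfolding selected_def by (rule subadditive)
  also have "v (\<Union>k<M. round_set k) \<le> (\<Sum>k<M. v (round_set k))"
    by (rule subadditive_UN) (use state_candidates_subset in auto)
  finally show ?thesis by simp
qed

lemma opt_value_le_rounds:
  assumes Opt: "Opt \<subseteq> N" "sum c Opt \<le> B" and M: "M = Suc m"
  shows "v Opt \<le> (\<Sum>k<M. v (round_set k)) + v (gu (state M)) + \<beta> * sum c Opt + rho m"
proof -
  define D where "D = \<beta> + rho m / B"
  have "0 \<le> rho m / B" using rho_nonneg budget_pos by simp
  then have D: "0 \<le> D" unfolding D_def using beta_pos by linarith
  have "finite Opt" using Opt(1) finite_ground finite_subset by blast
  have cost_le_B: "c x \<le> B" if "x \<in> Opt" for x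
  proof -
    have "c x \<le> sum c Opt" using that \<open>finite Opt\<close> Opt(1) cost_nonneg by (intro member_le_sum) auto
    then show ?thesis using Opt(2) by linarith
  qed
  have "marg v x selected \<le> c x * D" if x: "x \<in> Opt - selected" for x
    unfolding D_def using x Opt(1) cost_le_B by (intro marg_selected_le[OF _ _ M]) auto
  then have "v Opt \<le> v selected + (\<Sum>x\<in>Opt - selected. c x * D)"
    by (rule value_le_by_marg_bound[OF Opt(1) selected_subset])
  also have "(\<Sum>x\<in>Opt - selected. c x * D) \<le> sum c Opt * D"
    unfolding sum_distrib_right[symmetric] using \<open>finite Opt\<close> Opt(1) cost_nonneg D
    by (intro mult_right_mono sum_mono2) auto
  also have "sum c Opt * D \<le> \<beta> * sum c Opt + rho m"
  proof -
    have "0 \<le> sum c Opt" using Opt(1) cost_nonneg by (intro sum_nonneg) auto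
    then have "sum c Opt / B * rho m \<le> rho m"
      using Opt(2) budget_pos rho_nonneg by (intro mult_left_le_one_le) auto
    then show ?thesis by (simp add: D_def algebra_simps)
  qed
  finally show ?thesis using selected_value_le by simp
qed

lemma early_rounds_value_le:
  "(\<beta> - 1) * (\<Sum>k<m. v (round_set k)) \<le> \<beta> * (rho m / (\<alpha> - 1))"
proof -
  have "(\<beta> - 1) * (\<Sum>k<m. v (round_set k)) \<le> (\<Sum>k<m. \<beta> * rho k)"
    unfolding sum_distrib_left by (intro sum_mono round_set_value_le)
  also have "\<dots> = \<beta> * \<epsilon> * ((\<alpha> ^ m - 1) / (\<alpha> - 1))"
    using alpha_gt_1 by (simp add: geometric_sum sum_distrib_left[symmetric] mult.assoc)
  also have "\<dots> \<le> \<beta> * (rho m / (\<alpha> - 1))"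
    using alpha_gt_1 eps_pos beta_pos by (simp add: divide_right_mono)
  finally show ?thesis .
qed

abbreviation final_surplus :: "'a set \<Rightarrow> real" where
  "final_surplus A \<equiv> surplus (gp (state M)) A"

lemma last_round_progress:
  assumes M: "M = Suc (Suc m)" and best: "\<forall>A\<in>candidates (state M). final_surplus A \<le> W"
  shows "rho m \<le> 2 * W"
proof -
  let ?g1 = "state (Suc m)" and ?g = "state M"
  have "\<not> bfm_stop 1 ?g1" using not_stopped_before_M M by simp
  then have progress: "rho m < surplus (gp ?g1) (gcur ?g1 1) + surplus (gp ?g1) (gu ?g1)"
    using state_round_props(6)[of m] by blast
  from state_round_props(6)[of "Suc m"] M
  consider "gu ?g = gu ?g1" | "rho (Suc m) < final_surplus (gcur ?g 1) + final_surplus (gu ?g)"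
    by auto
  then show ?thesis
  proof cases
    case 1
    have "final_surplus A = surplus (gp ?g1) A" if "A \<subseteq> gcur ?g1 1 \<union> gu ?g1" for A
      using state_round_props(5)[of "Suc m"] M that by (intro surplus_cong) auto
    then have "rho m < final_surplus (gprev ?g 1) + final_surplus (gu ?g)"
      using progress 1 state_round_props(2)[of "Suc m"] M by simp
    then show ?thesis using best by auto
  next
    case 2
    then show ?thesis using best rho_mono[of m "Suc m"] by auto
  qed
qed

lemma output_best:
  assumes "S \<in> bfm_outputs v c B \<alpha> \<beta> \<epsilon> 1 ord"
  shows "S \<in> candidates (state M)" and "\<forall>A\<in>candidates (state M). final_surplus A \<le> final_surplus S"
  using assms unfolding bfm_outputs_def bfm_final_def bfm_candidates_single Let_def surplus_def
  by auto

lemma output_cost_le_price: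
  assumes "S \<in> bfm_outputs v c B \<alpha> \<beta> \<epsilon> 1 ord"
  shows "sum c S \<le> sum (gp (state M)) S"
proof -
  have "S \<subseteq> gR (state M)" "\<forall>u\<in>gR (state M). c u \<le> gp (state M) u"
    using output_best(1)[OF assms] state_inv_state[of M] unfolding state_inv_def by auto
  then show ?thesis by (intro sum_mono) auto
qed

lemma output_surplus_nonneg:
  assumes "1 \<le> \<beta>" "S \<in> bfm_outputs v c B \<alpha> \<beta> \<epsilon> 1 ord"
  shows "0 \<le> final_surplus S"
proof -
  let ?A = "gcur (state M) 1"
  have "?A \<subseteq> N" using state_candidates_subset[of ?A M] by simp
  then have "0 \<le> (\<beta> - 1) * v ?A" using assms(1) value_nonneg by simp
  also have "\<dots> \<le> \<beta> * final_surplus ?A"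
    using candidate_value_le_surplus[OF state_inv_state] by simp
  finally have "0 \<le> final_surplus ?A" using beta_pos by (simp add: zero_le_mult_iff)
  also have "\<dots> \<le> final_surplus S" using output_best(2)[OF assms(2)] by simp
  finally show ?thesis .
qed

lemma candidate_value_le_output:
  assumes "1 < \<beta>" "S \<in> bfm_outputs v c B \<alpha> \<beta> \<epsilon> 1 ord" "A \<in> candidates (state M)"
  shows "v A \<le> \<beta> / (\<beta> - 1) * final_surplus S"
proof -
  have "(\<beta> - 1) * v A \<le> \<beta> * final_surplus A"
    using candidate_value_le_surplus[OF state_inv_state assms(3)] .
  also have "\<dots> \<le> \<beta> * final_surplus S"
    using output_best(2)[OF assms(2)] assms(3) beta_pos by (intro mult_left_mono) auto
  finally show ?thesis by (rule le_ratio_mult[OF assms(1)])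
qed

lemma output_bound_one_round:
  assumes \<beta>: "1 < \<beta>" and Opt: "Opt \<subseteq> N" "sum c Opt \<le> B"
    and S: "S \<in> bfm_outputs v c B \<alpha> \<beta> \<epsilon> 1 ord" and M: "M = 1"
  shows "v Opt \<le> 2 * (\<beta> / (\<beta> - 1)) * final_surplus S + \<beta> * sum c Opt + \<epsilon>"
  using opt_value_le_rounds[OF Opt, of 0] M
    candidate_value_le_output[OF \<beta> S, of "gcur (state M) 1"]
    candidate_value_le_output[OF \<beta> S, of "gu (state M)"]
  by simp

lemma output_bound_more_rounds:
  assumes \<beta>: "1 < \<beta>" and Opt: "Opt \<subseteq> N" "sum c Opt \<le> B"
    and S: "S \<in> bfm_outputs v c B \<alpha> \<beta> \<epsilon> 1 ord" and M: "M = Suc (Suc m)"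
  shows "v Opt \<le> (\<beta> / (\<beta> - 1) * (3 + 2 / (\<alpha> - 1)) + 2 * \<alpha>) * final_surplus S
    + \<beta> * sum c Opt"
proof -
  define \<kappa> where "\<kappa> = \<beta> / (\<beta> - 1)"
  define W where "W = final_surplus S"
  have \<kappa>: "0 \<le> \<kappa>" unfolding \<kappa>_def using \<beta> by simp
  have cand: "v A \<le> \<kappa> * W" if "A \<in> candidates (state M)" for A
    unfolding \<kappa>_def W_def using candidate_value_le_output[OF \<beta> S that] .
  have last: "rho m \<le> 2 * W"
    using last_round_progress[OF M] output_best(2)[OF S] unfolding W_def by blast
  have "(\<Sum>k<m. v (round_set k)) \<le> \<kappa> * (rho m / (\<alpha> - 1))"
    unfolding \<kappa>_def using \<beta> early_rounds_value_le by (rule le_ratio_mult)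
  also have "\<dots> \<le> \<kappa> * (2 / (\<alpha> - 1)) * W"
  proof -
    have "rho m / (\<alpha> - 1) \<le> 2 * W / (\<alpha> - 1)" using last alpha_gt_1 by (intro divide_right_mono) auto
    then have "\<kappa> * (rho m / (\<alpha> - 1)) \<le> \<kappa> * (2 * W / (\<alpha> - 1))" using \<kappa> by (rule mult_left_mono)
    then show ?thesis by simp
  qed
  finally have early: "(\<Sum>k<m. v (round_set k)) \<le> \<kappa> * (2 / (\<alpha> - 1)) * W" .
  have "round_set m = gprev (state M) 1" using state_round_props(2)[of "Suc m"] M by simp
  then have final: "v (round_set m) + v (round_set (Suc m)) + v (gu (state M)) \<le> 3 * \<kappa> * W"
    using cand[of "gprev (state M) 1"] cand[of "gcur (state M) 1"] cand[of "gu (state M)"] M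
    by simp
  have "rho (Suc m) \<le> 2 * \<alpha> * W" using last alpha_gt_1 by simp
  then show ?thesis
    using opt_value_le_rounds[OF Opt M] early final M unfolding \<kappa>_def W_def
    by (simp add: algebra_simps)
qed

theorem output_surplus_bound:
  assumes \<beta>: "1 < \<beta>" and Opt: "Opt \<subseteq> N" "sum c Opt \<le> B"
    and S: "S \<in> bfm_outputs v c B \<alpha> \<beta> \<epsilon> 1 ord"
  shows "v Opt \<le> (\<beta> / (\<beta> - 1) * (3 + 2 / (\<alpha> - 1)) + 2 * \<alpha>) * final_surplus S
    + \<beta> * sum c Opt + \<epsilon>"
proof -
  obtain m' where M: "M = Suc m'" using M_stops(1) gr0_implies_Suc by blast
  show ?thesis
  proof (cases m')
    case 0
    have coeff: "2 * k \<le> k * (3 + d) + 2 * \<alpha>" if "0 \<le> k" "0 \<le> d" for k d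
      using that mult_nonneg_nonneg[of k d] alpha_gt_1 unfolding distrib_left by linarith
    have "0 \<le> \<beta> / (\<beta> - 1)" "0 \<le> 2 / (\<alpha> - 1)" using \<beta> alpha_gt_1 by simp_all
    then have "2 * (\<beta> / (\<beta> - 1)) \<le> \<beta> / (\<beta> - 1) * (3 + 2 / (\<alpha> - 1)) + 2 * \<alpha>"
      by (rule coeff)
    then have "2 * (\<beta> / (\<beta> - 1)) * final_surplus S
        \<le> (\<beta> / (\<beta> - 1) * (3 + 2 / (\<alpha> - 1)) + 2 * \<alpha>) * final_surplus S"
      using output_surplus_nonneg[OF _ S] \<beta> by (intro mult_right_mono) auto
    moreover have "M = 1" using M 0 by simp
    ultimately show ?thesis using output_bound_one_round[OF \<beta> Opt S] by linarith
  next
    case (Suc m)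
    have "M = Suc (Suc m)" using M Suc by simp
    from output_bound_more_rounds[OF \<beta> Opt S this] show ?thesis using eps_pos by linarith
  qed
qed

end

theorem theorem4p10:
  fixes v :: "'a set \<Rightarrow> real" and c :: "'a \<Rightarrow> real" and ord :: "'a list"
    and B \<epsilon> :: real and Opt Sstar :: "'a set"
  defines "N \<equiv> set ord"
  assumes "distinct ord"
    and "v {} = 0"
    and "\<forall>X\<subseteq>N. 0 \<le> v X"
    and "monotone_on_sets N v"
    and "submodular_on N v"
    and "\<forall>u\<in>N. 0 \<le> c u"
    and "B > 0" and "\<epsilon> > 0"
    and "Opt \<subseteq> N" and "sum c Opt \<le> B"
    and "\<forall>S\<subseteq>N. sum c S \<le> B \<longrightarrow> v S - sum c S \<le> v Opt - sum c Opt"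
    and "Sstar \<in> bfm_outputs v c B (1 + sqrt 6 / 2) 3 \<epsilon> 1 ord"
  shows "v Sstar - sum c Sstar \<ge> 0.0877 * v Opt - sum c Opt - \<epsilon> / 3"
proof -
  define \<alpha> :: real where "\<alpha> = 1 + sqrt 6 / 2"
  interpret bfm_run N v c B 3 ord \<alpha> \<epsilon>
    using assms(1-3,5-9) unfolding \<alpha>_def by unfold_locales auto
  have S: "Sstar \<in> bfm_outputs v c B \<alpha> 3 \<epsilon> 1 ord" using assms(13) unfolding \<alpha>_def .
  have W: "0 \<le> final_surplus Sstar" using output_surplus_nonneg[OF _ S] by simp
  have "3 / (3 - 1) * (3 + 2 / (\<alpha> - 1)) + 2 * \<alpha> = 13 / 2 + 2 * sqrt 6"
    unfolding \<alpha>_def by (simp add: field_simps)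
  also have "\<dots> \<le> 11.4"
    using real_le_lsqrt[of "2.4495" 6] by (simp add: power2_eq_square)
  finally have "(3 / (3 - 1) * (3 + 2 / (\<alpha> - 1)) + 2 * \<alpha>) * final_surplus Sstar
      \<le> 11.4 * final_surplus Sstar"
    using W by (rule mult_right_mono)
  then have "v Opt \<le> 11.4 * final_surplus Sstar + 3 * sum c Opt + \<epsilon>"
    using output_surplus_bound[OF _ assms(10,11) S] by simp
  moreover have "final_surplus Sstar \<le> v Sstar - sum c Sstar"
    using output_cost_le_price[OF S] unfolding surplus_def by simp
  moreover have "0 \<le> sum c Opt" using assms(7,10) by (auto intro: sum_nonneg)
  ultimately show ?thesis using W assms(9) by (simp; linarith)
qed

end
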